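(* Let $n\ge 1$ and let $\Lambda$ be a noncrossing set partition of $[n]=\{1,\dots,n\}$ with $k$ blocks. Then $\Lambda^+$ is a noncrossing set partition of $[n]$ with $n+1-k$ blocks.
   Context: A set partition is a set of nonempty, pairwise disjoint finite sets of integers (its blocks); it is a partition of $\mathcal X$ if the union of its blocks is $\mathcal X$. A pair $(i,j)$ is an arc of a set partition $\Lambda$ if $i<j$, $i$ and $j$ lie in the same block, and $j$ is the least element of that block greater than $i$; $\mathrm{Arc}(\Lambda)$ denotes the set of arcs (a partition is determined by its ground set and its arcs). $\Lambda$ is noncrossing if there are no two arcs $(i,k),(j,l)\in\mathrm{Arc}(\Lambda)$ with $i<j<k<l$. For a finite set $\mathcal X\subset\mathbb Z$ and a partition $\Lambda$ of $\mathcal X$, $\Lambda^+$ is the partition of $\mathcal X$ with arc set $(\mathrm{Arc}(\Lambda)\setminus\mathcal S)\cup\mathcal T$, where $\mathcal S=\{(i,i+1):i\in\mathbb Z\}$ and $\mathcal T$ is the set of pairs $(i,i+1)\in\mathcal X\times\mathcal X$ such that $i$ is the maximal element of its block of $\Lambda$ and $i+1$ is the minimal element of its block of $\Lambda$. *)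

theory Defs
  imports "HOL-Library.Disjoint_Sets"
begin

definition set_partition :: "int set set \<Rightarrow> bool" where
  "set_partition P \<longleftrightarrow> (\<forall>B\<in>P. B \<noteq> {} \<and> finite B) \<and> disjoint P"

definition partition_of :: "int set set \<Rightarrow> int set \<Rightarrow> bool" where
  "partition_of P X \<longleftrightarrow> set_partition P \<and> \<Union>P = X"

definition arcs :: "int set set \<Rightarrow> (int \<times> int) set" where
  "arcs P = {(i, j). i < j \<and> (\<exists>B\<in>P. i \<in> B \<and> j \<in> B \<and> (\<forall>x\<in>B. i < x \<longrightarrow> j \<le> x))}"

definition noncrossing :: "int set set \<Rightarrow> bool" where
  "noncrossing P \<longleftrightarrow>
     \<not> (\<exists>i j k l. (i, k) \<in> arcs P \<and> (j, l) \<in> arcs P \<and> i < j \<and> j < k \<and> k < l)"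

definition short_pairs :: "(int \<times> int) set" where
  "short_pairs = {(i, i + 1) | i. True}"

definition plus_pairs :: "int set \<Rightarrow> int set set \<Rightarrow> (int \<times> int) set" where
  "plus_pairs X P = {(i, i + 1) | i. i \<in> X \<and> i + 1 \<in> X \<and>
      (\<exists>B\<in>P. i \<in> B \<and> (\<forall>x\<in>B. x \<le> i)) \<and>
      (\<exists>B\<in>P. i + 1 \<in> B \<and> (\<forall>x\<in>B. i + 1 \<le> x))}"

definition plus_partition :: "int set \<Rightarrow> int set set \<Rightarrow> int set set" where
  "plus_partition X P = (THE Q. partition_of Q X \<and>
      arcs Q = (arcs P - short_pairs) \<union> plus_pairs X P)"

end

theory Submission
  imports Defs
begin

text \<open>A partition of a finite \<open>X \<subseteq> \<int>\<close> is determined by its arcs, and every strictly increasing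
  partial injection on \<open>X\<close> is the arc set of one (its blocks being the classes of the generated
  equivalence); so \<open>\<Lambda>\<^sup>+\<close> is well defined. Crossing arcs of \<open>\<Lambda>\<^sup>+\<close> are too long to be pairs
  \<open>(i, i + 1)\<close>, so they are crossing arcs of \<open>\<Lambda>\<close>. For the count, a partition of \<open>X\<close> has
  \<open>|X| - |Arc|\<close> blocks, and \<open>(i, j) \<mapsto> j - 1\<close> is a bijection from the arcs of \<open>\<Lambda>\<^sup>+\<close> onto the
  block maxima of \<open>\<Lambda>\<close> other than \<open>n\<close>; hence \<open>\<Lambda>\<^sup>+\<close> has \<open>k - 1\<close> arcs and \<open>n + 1 - k\<close> blocks.\<close>

section \<open>Blocks and arcs\<close>

lemma set_partition_block_unique:
  assumes "set_partition P" "B \<in> P" "B' \<in> P" "x \<in> B" "x \<in> B'"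
  shows "B = B'"
  using assms unfolding set_partition_def by (meson disjointD disjoint_iff)

lemma partition_of_block_exists:
  assumes "partition_of P X" "x \<in> X"
  obtains B where "B \<in> P" "x \<in> B"
  using assms unfolding partition_of_def by auto

lemma finite_partition_of:
  assumes "partition_of P X" "finite X"
  shows "finite P"
  using assms finite_UnionD unfolding partition_of_def by blast

lemma arcsD:
  assumes "(i, j) \<in> arcs P"
  shows "i < j \<and> (\<exists>B\<in>P. i \<in> B \<and> j \<in> B \<and> (\<forall>x\<in>B. i < x \<longrightarrow> j \<le> x))"
  using assms unfolding arcs_def by auto

lemma arcs_subset:
  assumes "partition_of P X"
  shows "arcs P \<subseteq> X \<times> X"
  using assms unfolding partition_of_def arcs_def by auto

lemma arc_target_in_block:
  assumes "set_partition P" "(i, j) \<in> arcs P" "B \<in> P" "i \<in> B"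
  shows "j \<in> B" "\<forall>x\<in>B. i < x \<longrightarrow> j \<le> x"
  using arcsD[OF assms(2)] set_partition_block_unique[OF assms(1) assms(3) _ assms(4)] by blast+

lemma arc_source_in_block:
  assumes "set_partition P" "(i, j) \<in> arcs P" "B \<in> P" "j \<in> B"
  shows "i \<in> B"
  using arcsD[OF assms(2)] set_partition_block_unique[OF assms(1) assms(3) _ assms(4)] by blast

lemma arcs_same_source:
  assumes "set_partition P" "(i, j) \<in> arcs P" "(i, j') \<in> arcs P"
  shows "j = j'"
proof -
  obtain B where B: "B \<in> P" "i \<in> B"
    using arcsD[OF assms(2)] by blast
  have "j \<in> B" "j' \<in> B" "\<forall>x\<in>B. i < x \<longrightarrow> j \<le> x" "\<forall>x\<in>B. i < x \<longrightarrow> j' \<le> x"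
    using arc_target_in_block[OF assms(1) _ B] assms(2,3) by blast+
  moreover have "i < j" "i < j'"
    using arcsD assms(2,3) by blast+
  ultimately show ?thesis by force
qed

lemma arcs_same_target:
  assumes "set_partition P" "(i, j) \<in> arcs P" "(i', j) \<in> arcs P"
  shows "i = i'"
proof -
  obtain B where B: "B \<in> P" "j \<in> B"
    using arcsD[OF assms(2)] by blast
  then have "i \<in> B" "i' \<in> B"
    using arc_source_in_block[OF assms(1)] assms(2,3) by blast+
  then have "\<forall>x\<in>B. i < x \<longrightarrow> j \<le> x" "\<forall>x\<in>B. i' < x \<longrightarrow> j \<le> x"
    using arc_target_in_block(2)[OF assms(1) _ B(1)] assms(2,3) by blast+
  moreover have "i < j" "i' < j"
    using arcsD assms(2,3) by blast+
  ultimately show ?thesis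
    using \<open>i \<in> B\<close> \<open>i' \<in> B\<close> by (meson linorder_neqE not_le)
qed

lemma arc_from_exists:
  assumes "set_partition P" "B \<in> P" "i \<in> B" "x \<in> B" "i < x"
  obtains j where "(i, j) \<in> arcs P" "j \<le> x"
proof -
  let ?S = "{y \<in> B. i < y}"
  have S: "finite ?S" "?S \<noteq> {}"
    using assms unfolding set_partition_def by auto
  have "Min ?S \<in> B" "i < Min ?S" "\<forall>y\<in>B. i < y \<longrightarrow> Min ?S \<le> y"
    using Min_in[OF S] Min_le[OF S(1)] by auto
  then have "(i, Min ?S) \<in> arcs P"
    unfolding arcs_def using assms(2,3) by blast
  moreover have "Min ?S \<le> x"
    using Min_le[OF S(1)] assms(4,5) by blast
  ultimately show thesis using that by blast
qed

lemma arc_into_exists: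
  assumes "set_partition P" "B \<in> P" "j \<in> B" "x \<in> B" "x < j"
  obtains i where "(i, j) \<in> arcs P" "x \<le> i"
proof -
  let ?S = "{y \<in> B. y < j}"
  have S: "finite ?S" "?S \<noteq> {}"
    using assms unfolding set_partition_def by auto
  have "Max ?S \<in> B" "Max ?S < j" "\<forall>y\<in>B. Max ?S < y \<longrightarrow> j \<le> y"
    using Max_in[OF S] Max_ge[OF S(1)] by force+
  then have "(Max ?S, j) \<in> arcs P"
    unfolding arcs_def using assms(2,3) by blast
  moreover have "x \<le> Max ?S"
    using Max_ge[OF S(1)] assms(4,5) by blast
  ultimately show thesis using that by blast
qed

section \<open>Block maxima\<close>

lemma Max_in_block:
  assumes "set_partition P" "B \<in> P"
  shows "Max B \<in> B"
  using assms Max_in unfolding set_partition_def by blast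

lemma mem_Max_image_iff:
  assumes "set_partition P" "B \<in> P" "i \<in> B"
  shows "i \<in> Max ` P \<longleftrightarrow> (\<forall>x\<in>B. x \<le> i)"
proof
  assume "i \<in> Max ` P"
  then obtain C where "C \<in> P" "i = Max C" by blast
  with assms have "C = B"
    using Max_in_block set_partition_block_unique by metis
  with \<open>i = Max C\<close> assms show "\<forall>x\<in>B. x \<le> i"
    unfolding set_partition_def by simp
next
  assume "\<forall>x\<in>B. x \<le> i"
  with assms have "i = Max B"
    unfolding set_partition_def by (intro Max_eqI[symmetric]) auto
  with assms(2) show "i \<in> Max ` P" by blast
qed

lemma Max_image_subset:
  assumes "partition_of P X"
  shows "Max ` P \<subseteq> X"
  using assms Max_in_block unfolding partition_of_def by blast

lemma inj_on_Max_partition: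
  assumes "set_partition P"
  shows "inj_on Max P"
  by (rule inj_onI) (metis assms Max_in_block set_partition_block_unique)

lemma fst_arcs_eq:
  assumes "set_partition P"
  shows "fst ` arcs P = \<Union>P - Max ` P"
proof (intro equalityI subsetI)
  fix i assume "i \<in> fst ` arcs P"
  then obtain j where "(i, j) \<in> arcs P" by force
  then obtain B where B: "B \<in> P" "i \<in> B" "j \<in> B" "i < j"
    using arcsD by blast
  then have "i \<notin> Max ` P"
    using mem_Max_image_iff[OF assms B(1,2)] by force
  with B show "i \<in> \<Union>P - Max ` P" by blast
next
  fix i assume i: "i \<in> \<Union>P - Max ` P"
  then obtain B where B: "B \<in> P" "i \<in> B" by blast
  with i obtain x where "x \<in> B" "i < x"
    using mem_Max_image_iff[OF assms B] by force
  then obtain j where "(i, j) \<in> arcs P"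
    using arc_from_exists[OF assms B] by blast
  then show "i \<in> fst ` arcs P" by force
qed

text \<open>Every element is either the maximum of its block or the source of exactly one arc.\<close>

lemma card_partition_arcs:
  assumes "partition_of P X" "finite X"
  shows "card X = card P + card (arcs P)"
proof -
  have sp: "set_partition P" and X: "X = \<Union>P"
    using assms(1) unfolding partition_of_def by auto
  note MX = Max_image_subset[OF assms(1)]
  have "inj_on fst (arcs P)"
    by (rule inj_onI) (metis arcs_same_source[OF sp] prod.collapse)
  then have "card (arcs P) = card (X - Max ` P)"
    using card_image fst_arcs_eq[OF sp] X by metis
  also have "\<dots> = card X - card P"
    using card_Diff_subset[OF finite_subset[OF MX assms(2)] MX]
      card_image[OF inj_on_Max_partition[OF sp]] by simp
  finally show ?thesis
    using card_mono[OF assms(2) MX] card_image[OF inj_on_Max_partition[OF sp]] by linarith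
qed

section \<open>Partitions and their arc sets\<close>

lemma rtrancl_arcs_same_block:
  assumes "set_partition P" "(x, y) \<in> (arcs P)\<^sup>*" "B \<in> P" "x \<in> B"
  shows "y \<in> B"
  using assms(2,4) by induction (use arc_target_in_block(1)[OF assms(1) _ assms(3)] in blast)+

lemma same_block_rtrancl_arcs:
  assumes "set_partition P" "B \<in> P" "x \<in> B" "y \<in> B" "x \<le> y"
  shows "(x, y) \<in> (arcs P)\<^sup>*"
  using assms(3-5)
proof (induction "nat (y - x)" arbitrary: x rule: less_induct)
  case less
  show ?case
  proof (cases "x = y")
    case False
    then obtain j where j: "(x, j) \<in> arcs P" "j \<le> y"
      using arc_from_exists[OF assms(1,2) less.prems(1,2)] less.prems(3) by force
    then have "x < j" "j \<in> B"
      using arcsD arc_target_in_block(1)[OF assms(1) _ assms(2) less.prems(1)] by blast+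
    then have "(j, y) \<in> (arcs P)\<^sup>*"
      using less.hyps[of j] j(2) less.prems(2) by simp
    with j(1) show ?thesis by (rule converse_rtrancl_into_rtrancl)
  qed simp
qed

lemma same_block_iff_rtrancl_arcs:
  assumes "set_partition P" "B \<in> P" "x \<in> B"
  shows "y \<in> B \<longleftrightarrow> (x, y) \<in> (arcs P)\<^sup>* \<or> (y, x) \<in> (arcs P)\<^sup>*"
proof
  assume "y \<in> B"
  then show "(x, y) \<in> (arcs P)\<^sup>* \<or> (y, x) \<in> (arcs P)\<^sup>*"
    using same_block_rtrancl_arcs[OF assms(1,2)] assms(3) by (meson linorder_le_cases)
next
  assume "(x, y) \<in> (arcs P)\<^sup>* \<or> (y, x) \<in> (arcs P)\<^sup>*"
  then show "y \<in> B"
  proof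
    assume yx: "(y, x) \<in> (arcs P)\<^sup>*"
    then show "y \<in> B"
    proof (cases rule: converse_rtranclE)
      case (step z)
      then obtain C where C: "C \<in> P" "y \<in> C"
        using arcsD by blast
      then have "x \<in> C"
        using rtrancl_arcs_same_block[OF assms(1) yx] by blast
      then have "C = B"
        using set_partition_block_unique[OF assms(1) C(1) assms(2) _ assms(3)] by blast
      with C show ?thesis by blast
    qed (use assms(3) in simp)
  qed (rule rtrancl_arcs_same_block[OF assms(1) _ assms(2,3)])
qed

lemma partition_of_arcs_subset:
  assumes "partition_of Q X" "partition_of Q' X" "arcs Q = arcs Q'"
  shows "Q \<subseteq> Q'"
proof
  fix B assume B: "B \<in> Q"
  have sp: "set_partition Q" "set_partition Q'"
    using assms(1,2) unfolding partition_of_def by auto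
  obtain x where x: "x \<in> B"
    using B sp(1) unfolding set_partition_def by auto
  then obtain B' where B': "B' \<in> Q'" "x \<in> B'"
    using B assms(1,2) unfolding partition_of_def by blast
  have "y \<in> B \<longleftrightarrow> y \<in> B'" for y
    using same_block_iff_rtrancl_arcs[OF sp(1) B x] same_block_iff_rtrancl_arcs[OF sp(2) B']
      assms(3) by simp
  with B' show "B \<in> Q'" by (metis subsetI subset_antisym)
qed

lemma partition_of_arcs_unique:
  assumes "partition_of Q X" "partition_of Q' X" "arcs Q = arcs Q'"
  shows "Q = Q'"
  using partition_of_arcs_subset assms by blast

lemma rtrancl_increasing_le:
  fixes R :: "('a::order \<times> 'a) set"
  assumes "(x, y) \<in> R\<^sup>*" "\<And>i j. (i, j) \<in> R \<Longrightarrow> i < j"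
  shows "x \<le> y"
  using assms(1) by induction (auto dest: assms(2))

lemma rtrancl_comparable_trans:
  assumes "single_valued R" "single_valued (R\<inverse>)"
    and "(x, y) \<in> R\<^sup>* \<or> (y, x) \<in> R\<^sup>*" "(y, z) \<in> R\<^sup>* \<or> (z, y) \<in> R\<^sup>*"
  shows "(x, z) \<in> R\<^sup>* \<or> (z, x) \<in> R\<^sup>*"
proof -
  have "(x, z) \<in> R\<^sup>* \<or> (z, x) \<in> R\<^sup>*" if "(y, x) \<in> R\<^sup>*" "(y, z) \<in> R\<^sup>*" for x y z
    using single_valued_confluent[OF assms(1) that] by blast
  moreover have "(x, z) \<in> R\<^sup>* \<or> (z, x) \<in> R\<^sup>*" if "(x, y) \<in> R\<^sup>*" "(z, y) \<in> R\<^sup>*" for x y z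
    using single_valued_confluent[OF assms(2)] that by (simp add: rtrancl_converse)
  ultimately show ?thesis
    using assms(3,4) by (meson rtrancl_trans)
qed

lemma rtrancl_increasing_first_step:
  fixes R :: "('a::order \<times> 'a) set"
  assumes "(x, y) \<in> R\<^sup>* \<or> (y, x) \<in> R\<^sup>*" "x < y" "\<And>i j. (i, j) \<in> R \<Longrightarrow> i < j"
  obtains z where "(x, z) \<in> R" "(z, y) \<in> R\<^sup>*"
proof -
  have "(x, y) \<in> R\<^sup>*"
    using assms rtrancl_increasing_le[of y x R] by force
  with \<open>x < y\<close> show thesis
    using that by (metis converse_rtranclE order.irrefl)
qed

lemma partition_of_quotient:
  assumes "finite X" "equiv X E"
  shows "partition_of (X // E) X"
  unfolding partition_of_def set_partition_def
proof (intro conjI ballI)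
  show "disjoint (X // E)"
    unfolding disjoint_def using quotient_disj[OF assms(2)] by blast
qed (use in_quotient_imp_non_empty[OF assms(2)] in_quotient_imp_subset[OF assms(2)]
    Union_quotient[OF assms(2)] assms(1) in \<open>auto intro: finite_subset\<close>)

lemma partition_of_with_arcs_exists:
  fixes R :: "(int \<times> int) set"
  assumes "finite X" "R \<subseteq> X \<times> X" "\<And>i j. (i, j) \<in> R \<Longrightarrow> i < j"
    and "single_valued R" "single_valued (R\<inverse>)"
  shows "\<exists>Q. partition_of Q X \<and> arcs Q = R"
proof -
  define E where "E = {(x, y). x \<in> X \<and> y \<in> X \<and> ((x, y) \<in> R\<^sup>* \<or> (y, x) \<in> R\<^sup>*)}"
  have "trans E"
    unfolding trans_def E_def using rtrancl_comparable_trans[OF assms(4,5)] by blast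
  then have equiv: "equiv X E"
    by (intro equivI) (auto simp: E_def refl_on_def sym_def)
  define Q where "Q = X // E"
  have first_step: "\<exists>z. (i, z) \<in> R \<and> (z, x) \<in> R\<^sup>*" if "(i, x) \<in> E" "i < x" for i x
    using that rtrancl_increasing_first_step[of i x R] assms(3) unfolding E_def by blast
  have "arcs Q = R"
  proof (intro equalityI subsetI)
    fix p assume "p \<in> arcs Q"
    then obtain i j B where p: "p = (i, j)" "i < j" "B \<in> Q" "i \<in> B" "j \<in> B"
      and least: "\<forall>x\<in>B. i < x \<longrightarrow> j \<le> x"
      unfolding arcs_def by blast
    have "(i, j) \<in> E"
      using in_quotient_imp_in_rel[OF equiv] p(3-5) unfolding Q_def by blast
    then obtain z where z: "(i, z) \<in> R" "(z, j) \<in> R\<^sup>*"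
      using first_step p(2) by blast
    have "(i, z) \<in> E"
      using z(1) assms(2) unfolding E_def by blast
    then have "z \<in> B"
      using p(3,4) equiv unfolding Q_def quotient_def by (auto dest: equiv_class_eq)
    then have "z = j"
      using least assms(3)[OF z(1)] rtrancl_increasing_le[OF z(2) assms(3)] by force
    with z(1) p(1) show "p \<in> R" by simp
  next
    fix p assume "p \<in> R"
    then obtain i j where p: "p = (i, j)" "(i, j) \<in> R" by (cases p) auto
    define B where "B = E `` {i}"
    have "i \<in> X" "j \<in> X"
      using p(2) assms(2) by auto
    then have B: "B \<in> Q" "i \<in> B" "j \<in> B"
      unfolding B_def Q_def using p(2) by (auto intro: quotientI, auto simp: E_def)
    have "j \<le> x" if x: "x \<in> B" "i < x" for x
    proof -
      have "(i, x) \<in> E"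
        using x(1) unfolding B_def by blast
      then obtain z where "(i, z) \<in> R" "(z, x) \<in> R\<^sup>*"
        using first_step x(2) by blast
      with p(2) assms(4) show ?thesis
        using rtrancl_increasing_le[OF _ assms(3)] unfolding single_valued_def by blast
    qed
    then show "p \<in> arcs Q"
      unfolding arcs_def using p assms(3) B by blast
  qed
  with partition_of_quotient[OF assms(1) equiv] show ?thesis
    unfolding Q_def by blast
qed

section \<open>The partition \<open>\<Lambda>\<^sup>+\<close>\<close>

definition plus_arcs :: "int set \<Rightarrow> int set set \<Rightarrow> (int \<times> int) set" where
  "plus_arcs X P = (arcs P - short_pairs) \<union> plus_pairs X P"

lemma plus_pairsD:
  assumes "(i, j) \<in> plus_pairs X P"
  shows "j = i + 1" "i \<in> X" "i + 1 \<in> X" "\<exists>B\<in>P. i \<in> B \<and> (\<forall>x\<in>B. x \<le> i)"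
    "\<exists>B\<in>P. i + 1 \<in> B \<and> (\<forall>x\<in>B. i + 1 \<le> x)"
  using assms unfolding plus_pairs_def by auto

lemma plus_pairs_source_not_arc_source:
  assumes "set_partition P" "(i, j) \<in> plus_pairs X P"
  shows "(i, j') \<notin> arcs P"
  using plus_pairsD(4)[OF assms(2)] arc_target_in_block[OF assms(1)] arcsD
  by (meson not_le)

lemma plus_pairs_target_not_arc_target:
  assumes "set_partition P" "(i, j) \<in> plus_pairs X P"
  shows "(i', j) \<notin> arcs P"
  using plus_pairsD(1,5)[OF assms(2)] arc_source_in_block[OF assms(1)] arcsD
  by (metis not_le)

lemma plus_arcs_subset:
  assumes "partition_of P X"
  shows "plus_arcs X P \<subseteq> X \<times> X"
  using arcs_subset[OF assms] unfolding plus_arcs_def plus_pairs_def by blast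

lemma plus_arcs_increasing:
  assumes "(i, j) \<in> plus_arcs X P"
  shows "i < j"
  using assms arcsD plus_pairsD(1) unfolding plus_arcs_def by fastforce

lemma plus_arcs_long_imp_arcs:
  assumes "(i, j) \<in> plus_arcs X P" "i + 1 < j"
  shows "(i, j) \<in> arcs P"
  using assms plus_pairsD(1) unfolding plus_arcs_def by fastforce

lemma single_valued_plus_arcs:
  assumes "set_partition P"
  shows "single_valued (plus_arcs X P)"
proof (rule single_valuedI)
  fix i j j' assume "(i, j) \<in> plus_arcs X P" "(i, j') \<in> plus_arcs X P"
  then show "j = j'"
    using arcs_same_source[OF assms] plus_pairsD(1) plus_pairs_source_not_arc_source[OF assms]
    unfolding plus_arcs_def by (metis DiffD1 UnE)
qed

lemma single_valued_converse_plus_arcs: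
  assumes "set_partition P"
  shows "single_valued ((plus_arcs X P)\<inverse>)"
proof (rule single_valuedI)
  fix j i i' assume "(j, i) \<in> (plus_arcs X P)\<inverse>" "(j, i') \<in> (plus_arcs X P)\<inverse>"
  then have "(i, j) \<in> plus_arcs X P" "(i', j) \<in> plus_arcs X P" by auto
  then show "i = i'"
    using arcs_same_target[OF assms] plus_pairsD(1) plus_pairs_target_not_arc_target[OF assms]
    unfolding plus_arcs_def by (metis DiffD1 UnE add_right_cancel)
qed

lemma plus_partition_spec:
  assumes "partition_of P X" "finite X"
  shows "partition_of (plus_partition X P) X" "arcs (plus_partition X P) = plus_arcs X P"
proof -
  have sp: "set_partition P"
    using assms(1) unfolding partition_of_def by blast
  obtain Q where Q: "partition_of Q X" "arcs Q = plus_arcs X P"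
    using partition_of_with_arcs_exists[OF assms(2) plus_arcs_subset[OF assms(1)]
        plus_arcs_increasing[of _ _ X P] single_valued_plus_arcs[OF sp]
        single_valued_converse_plus_arcs[OF sp]]
    by blast
  have "plus_partition X P = Q"
    unfolding plus_partition_def plus_arcs_def[symmetric]
  proof (rule the_equality)
    fix Q' assume "partition_of Q' X \<and> arcs Q' = plus_arcs X P"
    with Q show "Q' = Q" using partition_of_arcs_unique by metis
  qed (use Q in blast)
  with Q show "partition_of (plus_partition X P) X" "arcs (plus_partition X P) = plus_arcs X P"
    by simp_all
qed

lemma noncrossing_plus_partition:
  assumes "partition_of P X" "finite X" "noncrossing P"
  shows "noncrossing (plus_partition X P)"
proof -
  have "(i, k) \<in> arcs P \<and> (j, l) \<in> arcs P"
    if "(i, k) \<in> plus_arcs X P" "(j, l) \<in> plus_arcs X P" "i < j" "j < k" "k < l" for i j k l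
    using that plus_arcs_long_imp_arcs by simp
  then show ?thesis
    using assms(3) unfolding noncrossing_def plus_partition_spec(2)[OF assms(1,2)] by blast
qed

text \<open>An arc leaving \<open>j - 1\<close> would cross the long arc \<open>(i, j)\<close>.\<close>

lemma noncrossing_long_arc_pred_target_block_max:
  assumes "set_partition P" "noncrossing P" "(i, j) \<in> arcs P" "i + 1 < j"
    and "C \<in> P" "j - 1 \<in> C"
  shows "\<forall>x\<in>C. x \<le> j - 1"
proof (rule ccontr)
  assume "\<not> (\<forall>x\<in>C. x \<le> j - 1)"
  then obtain l where l: "(j - 1, l) \<in> arcs P"
    using arc_from_exists[OF assms(1,5,6)] by (meson not_le)
  have "l \<noteq> j"
  proof
    assume "l = j"
    with arcs_same_target[OF assms(1,3)] l have "i = j - 1" by blast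
    with assms(4) show False by simp
  qed
  then have "j < l"
    using arcsD[OF l] by simp
  moreover have "\<not> ((i, j) \<in> arcs P \<and> (j - 1, l) \<in> arcs P \<and> i < j - 1 \<and> j - 1 < j \<and> j < l)"
    using assms(2) unfolding noncrossing_def by blast
  ultimately show False
    using assms(3,4) l by simp
qed

lemma plus_arcs_pred_target_subset:
  fixes a b :: int
  assumes "partition_of P {a..b}" "noncrossing P" "(i, j) \<in> plus_arcs {a..b} P"
  shows "j - 1 \<in> Max ` P - {b}"
proof -
  have sp: "set_partition P"
    using assms(1) unfolding partition_of_def by blast
  have "a \<le> i" "j \<le> b"
    using plus_arcs_subset[OF assms(1)] assms(3) by auto
  have "j - 1 \<in> Max ` P"
  proof (cases "(i, j) \<in> plus_pairs {a..b} P")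
    case True
    then obtain B where "B \<in> P" "i \<in> B" "\<forall>x\<in>B. x \<le> i"
      using plus_pairsD(4) by blast
    then have "i \<in> Max ` P"
      using mem_Max_image_iff[OF sp] by blast
    then show ?thesis
      using plus_pairsD(1)[OF True] by simp
  next
    case False
    then have "(i, j) \<in> arcs P - short_pairs"
      using assms(3) unfolding plus_arcs_def by blast
    then have arc: "(i, j) \<in> arcs P" and "j \<noteq> i + 1"
      by (auto simp: short_pairs_def)
    then have "i + 1 < j"
      using arcsD[OF arc, THEN conjunct1] by simp
    then have "j - 1 \<in> {a..b}"
      using \<open>a \<le> i\<close> \<open>j \<le> b\<close> by simp
    then obtain C where C: "C \<in> P" "j - 1 \<in> C"
      using partition_of_block_exists[OF assms(1)] by blast
    then show ?thesis
      using noncrossing_long_arc_pred_target_block_max[OF sp assms(2) arc \<open>i + 1 < j\<close> C]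
        mem_Max_image_iff[OF sp C] by blast
  qed
  with \<open>j \<le> b\<close> show ?thesis by simp
qed

lemma block_max_plus_arcs_target:
  assumes "partition_of P X" "m \<in> Max ` P" "m + 1 \<in> X"
  shows "\<exists>h. (h, m + 1) \<in> plus_arcs X P"
proof -
  have sp: "set_partition P"
    using assms(1) unfolding partition_of_def by blast
  obtain B where B: "B \<in> P" "m = Max B"
    using assms(2) by blast
  then have "m \<in> B"
    using Max_in_block[OF sp B(1)] by simp
  then have maximal: "\<forall>x\<in>B. x \<le> m"
    using mem_Max_image_iff[OF sp B(1)] assms(2) by blast
  have "m \<in> X"
    using Max_image_subset[OF assms(1)] assms(2) by blast
  obtain C where C: "C \<in> P" "m + 1 \<in> C"
    using partition_of_block_exists[OF assms(1,3)] by blast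
  show ?thesis
  proof (cases "\<forall>x\<in>C. m + 1 \<le> x")
    case True
    then have "(m, m + 1) \<in> plus_pairs X P"
      unfolding plus_pairs_def using \<open>m \<in> B\<close> \<open>m \<in> X\<close> assms(3) B(1) C maximal by blast
    then show ?thesis
      unfolding plus_arcs_def by blast
  next
    case False
    then obtain x where "x \<in> C" "x < m + 1"
      by (meson not_le)
    then obtain h where h: "(h, m + 1) \<in> arcs P"
      using arc_into_exists[OF sp C] by blast
    have "h \<noteq> m"
    proof
      assume "h = m"
      then have "m + 1 \<in> B"
        using arc_target_in_block(1)[OF sp _ B(1) \<open>m \<in> B\<close>] h by blast
      with maximal show False by fastforce
    qed
    then have "(h, m + 1) \<notin> short_pairs"
      by (auto simp: short_pairs_def)
    with h show ?thesis
      unfolding plus_arcs_def by blast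
  qed
qed

lemma plus_arcs_pred_target_image:
  fixes a b :: int
  assumes "partition_of P {a..b}" "noncrossing P"
  shows "(\<lambda>(i, j). j - 1) ` plus_arcs {a..b} P = Max ` P - {b}"
proof (intro equalityI subsetI)
  fix m assume "m \<in> (\<lambda>(i, j). j - 1) ` plus_arcs {a..b} P"
  then show "m \<in> Max ` P - {b}"
    using plus_arcs_pred_target_subset[OF assms] by auto
next
  fix m assume m: "m \<in> Max ` P - {b}"
  then have "m \<in> {a..b}"
    using Max_image_subset[OF assms(1)] by blast
  with m have "m + 1 \<in> {a..b}"
    by simp
  with m obtain h where "(h, m + 1) \<in> plus_arcs {a..b} P"
    using block_max_plus_arcs_target[OF assms(1)] by blast
  then show "m \<in> (\<lambda>(i, j). j - 1) ` plus_arcs {a..b} P"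
    by (auto intro: rev_image_eqI)
qed

lemma card_plus_arcs:
  fixes a b :: int
  assumes "partition_of P {a..b}" "noncrossing P" "a \<le> b"
  shows "card (plus_arcs {a..b} P) + 1 = card P"
proof -
  have sp: "set_partition P"
    using assms(1) unfolding partition_of_def by blast
  have "inj_on (\<lambda>(i, j). j - 1) (plus_arcs {a..b} P)"
    using single_valued_converse_plus_arcs[OF sp] unfolding inj_on_def single_valued_def by auto
  then have "card (plus_arcs {a..b} P) = card (Max ` P - {b})"
    using card_image plus_arcs_pred_target_image[OF assms(1,2)] by metis
  moreover obtain B where B: "B \<in> P" "b \<in> B"
    using partition_of_block_exists[OF assms(1)] assms(3) by auto
  then have "\<forall>x\<in>B. x \<le> b"
    using assms(1) unfolding partition_of_def by auto
  then have "b \<in> Max ` P"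
    using mem_Max_image_iff[OF sp B] by blast
  moreover have "finite (Max ` P)"
    using finite_partition_of[OF assms(1)] by simp
  moreover have "card (Max ` P) = card P"
    using card_image[OF inj_on_Max_partition[OF sp]] .
  ultimately show ?thesis
    using card_gt_0_iff[of "Max ` P"] by (auto simp: card_Diff_singleton)
qed

theorem proposition2p4:
  fixes n k :: nat and \<Lambda> :: "int set set"
  assumes "n \<ge> 1"
    and "partition_of \<Lambda> {1..int n}"
    and "noncrossing \<Lambda>"
    and "card \<Lambda> = k"
  shows "partition_of (plus_partition {1..int n} \<Lambda>) {1..int n}
    \<and> noncrossing (plus_partition {1..int n} \<Lambda>)
    \<and> card (plus_partition {1..int n} \<Lambda>) = n + 1 - k"
proof -
  let ?X = "{1..int n}"
  have "finite ?X" by simp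
  note plus = plus_partition_spec[OF assms(2) this]
  have "n = card (plus_partition ?X \<Lambda>) + card (plus_arcs ?X \<Lambda>)"
    using card_partition_arcs[OF plus(1)] plus(2) by simp
  moreover have "card (plus_arcs ?X \<Lambda>) + 1 = k"
    using card_plus_arcs[OF assms(2,3)] assms(1,4) by simp
  ultimately show ?thesis
    using plus(1) noncrossing_plus_partition[OF assms(2) \<open>finite ?X\<close> assms(3)] by simp
qed

end
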